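(* Let $R$ be an associative ring with identity, let $a,b,c,y\in R$ and suppose that both $b$ and $c$ are regular. Then the following are equivalent: (i) $y$ is the $(b,c)$-inverse of $a$; (ii) $y$ is a hybrid $(b,c)$-inverse of $a$; (iii) $y$ is an annihilator $(b,c)$-inverse of $a$.
   Context: For $a,b,c\in R$, $y$ is the $(b,c)$-inverse of $a$ if $y\in (bRy)\cap(yRc)$, $yab=b$ and $cay=c$ (such $y$ is unique). $y$ is a hybrid $(b,c)$-inverse of $a$ if $yay=y$, $yR=bR$ and $r(y)=r(c)$. $y$ is an annihilator $(b,c)$-inverse of $a$ if $yay=y$, $l(y)=l(b)$ and $r(y)=r(c)$. Here $l(x)=\{z\in R:zx=0\}$, $r(x)=\{z\in R:xz=0\}$, $xR=\{xz:z\in R\}$. An element is regular if $x=xzx$ for some $z\in R$. *)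

theory Defs
  imports Main
begin

definition lann :: "'a::ring_1 \<Rightarrow> 'a set" where
  "lann x = {z. z * x = 0}"

definition rann :: "'a::ring_1 \<Rightarrow> 'a set" where
  "rann x = {z. x * z = 0}"

definition rideal :: "'a::ring_1 \<Rightarrow> 'a set" where
  "rideal x = {x * z | z. True}"

definition regular :: "'a::ring_1 \<Rightarrow> bool" where
  "regular x \<longleftrightarrow> (\<exists>z. x = x * z * x)"

definition bc_inverse :: "'a::ring_1 \<Rightarrow> 'a \<Rightarrow> 'a \<Rightarrow> 'a \<Rightarrow> bool" where
  "bc_inverse a b c y \<longleftrightarrow>
     (\<exists>s. y = b * s * y) \<and> (\<exists>t. y = y * t * c) \<and> y * a * b = b \<and> c * a * y = c"

definition hybrid_bc_inverse :: "'a::ring_1 \<Rightarrow> 'a \<Rightarrow> 'a \<Rightarrow> 'a \<Rightarrow> bool" where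
  "hybrid_bc_inverse a b c y \<longleftrightarrow>
     y * a * y = y \<and> rideal y = rideal b \<and> rann y = rann c"

definition annihilator_bc_inverse :: "'a::ring_1 \<Rightarrow> 'a \<Rightarrow> 'a \<Rightarrow> 'a \<Rightarrow> bool" where
  "annihilator_bc_inverse a b c y \<longleftrightarrow>
     y * a * y = y \<and> lann y = lann b \<and> rann y = rann c"

end

theory Submission
  imports Defs
begin

text \<open>For a regular element z = zwz, l(z) \<subseteq> l(x) forces x = zwx and r(z) \<subseteq> r(x) forces
  x = xwz, because (1 - zw)z = 0 and z(1 - wz) = 0. An outer inverse y of a (yay = y) is
  regular with inner inverse a, so these factorisations turn the annihilator conditions into
  the equations yab = b, cay = c and y \<in> yRc of the (b,c)-inverse, and show that for regular
  y and b the conditions yR = bR and l(y) = l(b) coincide.\<close>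

lemma rideal_subset_iff:
  fixes x z :: "'a::ring_1"
  shows "rideal x \<subseteq> rideal z \<longleftrightarrow> (\<exists>u. x = z * u)"
proof
  assume "rideal x \<subseteq> rideal z"
  moreover have "x \<in> rideal x" unfolding rideal_def by (auto intro: exI[of _ 1])
  ultimately show "\<exists>u. x = z * u" unfolding rideal_def by auto
next
  assume "\<exists>u. x = z * u"
  then obtain u where "x = z * u" by blast
  then show "rideal x \<subseteq> rideal z"
    unfolding rideal_def by (auto simp: mult.assoc)
qed

lemma rideal_eq_iff:
  fixes x z :: "'a::ring_1"
  shows "rideal x = rideal z \<longleftrightarrow> (\<exists>u. x = z * u) \<and> (\<exists>p. z = x * p)"
  by (simp only: set_eq_subset rideal_subset_iff)

lemma lann_subset_of_left_factor:
  fixes x z u :: "'a::ring_1"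
  assumes "x = z * u"
  shows "lann z \<subseteq> lann x"
  using assms unfolding lann_def by (auto simp flip: mult.assoc)

lemma rann_subset_of_right_factor:
  fixes x z u :: "'a::ring_1"
  assumes "x = u * z"
  shows "rann z \<subseteq> rann x"
  using assms unfolding rann_def by (auto simp: mult.assoc)

lemma lann_subset_imp_factor:
  fixes x z w :: "'a::ring_1"
  assumes "z = z * w * z" and "lann z \<subseteq> lann x"
  shows "x = z * w * x"
proof -
  have "(1 - z * w) * z = 0" using assms(1) by (simp add: algebra_simps)
  then have "(1 - z * w) * x = 0" using assms(2) unfolding lann_def by blast
  then show ?thesis by (simp add: algebra_simps)
qed

lemma rann_subset_imp_factor:
  fixes x z w :: "'a::ring_1"
  assumes "z = z * w * z" and "rann z \<subseteq> rann x"
  shows "x = x * w * z"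
proof -
  have "z * (1 - w * z) = 0" using assms(1) by (simp add: algebra_simps mult.assoc)
  then have "x * (1 - w * z) = 0" using assms(2) unfolding rann_def by blast
  then show ?thesis by (simp add: algebra_simps mult.assoc)
qed

lemma lann_subset_imp_rideal_subset:
  fixes x z :: "'a::ring_1"
  assumes "regular z" and "lann z \<subseteq> lann x"
  shows "rideal x \<subseteq> rideal z"
proof -
  obtain w where "z = z * w * z" using assms(1) unfolding regular_def by blast
  then have "x = z * (w * x)" using lann_subset_imp_factor assms(2) by (metis mult.assoc)
  then show ?thesis unfolding rideal_subset_iff by blast
qed

lemma rideal_eq_iff_lann_eq:
  fixes x z :: "'a::ring_1"
  assumes "regular x" and "regular z"
  shows "rideal x = rideal z \<longleftrightarrow> lann x = lann z"
proof
  assume "rideal x = rideal z"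
  then obtain u p where "x = z * u" and "z = x * p" unfolding rideal_eq_iff by blast
  then show "lann x = lann z"
    using lann_subset_of_left_factor by blast
next
  assume "lann x = lann z"
  then show "rideal x = rideal z"
    using lann_subset_imp_rideal_subset[OF assms(1)] lann_subset_imp_rideal_subset[OF assms(2)]
    by blast
qed

lemma bc_inverse_imp_hybrid:
  fixes a b c y :: "'a::ring_1"
  assumes "bc_inverse a b c y"
  shows "hybrid_bc_inverse a b c y"
proof -
  obtain s t where s: "y = b * s * y" and t: "y = y * t * c"
    and yab: "y * a * b = b" and cay: "c * a * y = c"
    using assms unfolding bc_inverse_def by blast
  have yay: "y * a * y = y" using s yab by (metis mult.assoc)
  have "rideal y = rideal b"
    unfolding rideal_eq_iff using s yab by (metis mult.assoc)
  moreover have "rann y = rann c"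
  proof
    show "rann c \<subseteq> rann y" using rann_subset_of_right_factor[OF t] .
    show "rann y \<subseteq> rann c" using rann_subset_of_right_factor[OF cay[symmetric]] .
  qed
  ultimately show ?thesis unfolding hybrid_bc_inverse_def using yay by blast
qed

lemma hybrid_imp_bc_inverse:
  fixes a b c y :: "'a::ring_1"
  assumes "regular c" and "hybrid_bc_inverse a b c y"
  shows "bc_inverse a b c y"
proof -
  have yay: "y * a * y = y" and r: "rideal y = rideal b" and rann: "rann y = rann c"
    using assms(2) unfolding hybrid_bc_inverse_def by auto
  obtain v where v: "c = c * v * c" using assms(1) unfolding regular_def by blast
  obtain u p where u: "y = b * u" and p: "b = y * p" using r unfolding rideal_eq_iff by blast
  have "y = b * (u * a) * y" using u yay by (metis mult.assoc)
  moreover have "b = y * a * b"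
    using lann_subset_imp_factor[OF yay[symmetric] lann_subset_of_left_factor[OF p]] .
  moreover have "y = y * v * c" using rann_subset_imp_factor[OF v] rann by blast
  moreover have "c = c * a * y" using rann_subset_imp_factor[OF yay[symmetric]] rann by blast
  ultimately show ?thesis unfolding bc_inverse_def by metis
qed

lemma hybrid_iff_annihilator:
  fixes a b c y :: "'a::ring_1"
  assumes "regular b"
  shows "hybrid_bc_inverse a b c y \<longleftrightarrow> annihilator_bc_inverse a b c y"
proof -
  have "regular y" if "y * a * y = y"
    using that unfolding regular_def by metis
  then show ?thesis
    unfolding hybrid_bc_inverse_def annihilator_bc_inverse_def
    using rideal_eq_iff_lann_eq assms by blast
qed

theorem theorem3p11:
  fixes a b c y :: "'a::ring_1"
  assumes "regular b" and "regular c"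
  shows "(bc_inverse a b c y \<longleftrightarrow> hybrid_bc_inverse a b c y) \<and>
         (hybrid_bc_inverse a b c y \<longleftrightarrow> annihilator_bc_inverse a b c y)"
  using bc_inverse_imp_hybrid hybrid_imp_bc_inverse[OF assms(2)]
    hybrid_iff_annihilator[OF assms(1)] by blast

end
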